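(* Let $A=(a_{ij})_{1\le i,j\le n}$ be a complex Nekrasov matrix, let $\epsilon_1,\dots,\epsilon_n$ be real numbers satisfying either the conditions (C1) or the conditions (C2) below, and let $S=\mathrm{diag}\left(\frac{h_i(A)+\epsilon_i}{|a_{ii}|}\right)_{i=1}^n$. Define $z_1(A):=1$ and $z_i(A):=\sum_{j=1}^{i-1}|a_{ij}|\frac{z_j(A)}{|a_{jj}|}+1$ for $i=2,\dots,n$. Then $$\|A^{-1}\|_\infty\le \max_{i\in N}\left(\frac{h_i(A)+\epsilon_i}{|a_{ii}|}\right)\,\max_{i\in N}\frac{z_i(A)}{h_i(A)+\epsilon_i-h_i(AS)},$$ where all denominators $h_i(A)+\epsilon_i-h_i(AS)$ are positive.
   Context: For a complex $n\times n$ matrix $A=(a_{ij})$ with $a_{ii}\ne 0$ for all $i$, define recursively $h_1(A):=\sum_{j\ne 1}|a_{1j}|$ and $h_i(A):=\sum_{j=1}^{i-1}|a_{ij}|\frac{h_j(A)}{|a_{jj}|}+\sum_{j=i+1}^{n}|a_{ij}|$ for $i=2,\dots,n$ (the same definition is applied to $AS$ to obtain $h_i(AS)$). $A$ is a Nekrasov matrix if $|a_{ii}|>h_i(A)$ for all $i\in N=\{1,\dots,n\}$. $\|\cdot\|_\infty$ is the maximum absolute row sum norm. Conditions (C1): $\epsilon_1>0$, and for $i=2,\dots,n$: $0<\epsilon_i\le |a_{ii}|-h_i(A)$ and $\epsilon_i>\sum_{j=1}^{i-1}\frac{|a_{ij}|\epsilon_j}{|a_{jj}|}$. Conditions (C2):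 let $k$ be the smallest index such that $a_{kj}=0$ for all $j>k$; $\epsilon_i=0$ for $i=1,\dots,k-1$, and for $i=k,\dots,n$: $0<\epsilon_i<|a_{ii}|-h_i(A)$ and $\epsilon_i>\sum_{j=k}^{i-1}\frac{|a_{ij}|\epsilon_j}{|a_{jj}|}$ (empty sum for $i=k$). *)

theory Defs
  imports "Jordan_Normal_Form.Matrix" Complex_Main
begin

text \<open>Indices are 0-based: index i here corresponds to index i+1 of the paper.
  The dimension n of the matrix is dim_col A.\<close>

function nek_h :: "complex mat \<Rightarrow> nat \<Rightarrow> real" where
  "nek_h A i = (\<Sum>j<i. cmod (A $$ (i,j)) * nek_h A j / cmod (A $$ (j,j)))
              + (\<Sum>j\<in>{i<..<dim_col A}. cmod (A $$ (i,j)))"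
  by pat_completeness auto
termination
  by (relation "measure (\<lambda>(A,i). i)") auto

function nek_z :: "complex mat \<Rightarrow> nat \<Rightarrow> real" where
  "nek_z A i = (\<Sum>j<i. cmod (A $$ (i,j)) * nek_z A j / cmod (A $$ (j,j))) + 1"
  by pat_completeness auto
termination
  by (relation "measure (\<lambda>(A,i). i)") auto

definition nekrasov :: "complex mat \<Rightarrow> nat \<Rightarrow> bool" where
  "nekrasov A n \<longleftrightarrow> A \<in> carrier_mat n n \<and>
     (\<forall>i<n. A $$ (i,i) \<noteq> 0) \<and> (\<forall>i<n. cmod (A $$ (i,i)) > nek_h A i)"

definition norm_inf_mat :: "complex mat \<Rightarrow> real" where
  "norm_inf_mat B = Max ({0} \<union> (\<lambda>i. \<Sum>j<dim_col B. cmod (B $$ (i,j))) ` {..<dim_row B})"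

definition cond_C1 :: "complex mat \<Rightarrow> nat \<Rightarrow> (nat \<Rightarrow> real) \<Rightarrow> bool" where
  "cond_C1 A n \<epsilon> \<longleftrightarrow> \<epsilon> 0 > 0 \<and>
     (\<forall>i. 1 \<le> i \<and> i < n \<longrightarrow>
        0 < \<epsilon> i \<and> \<epsilon> i \<le> cmod (A $$ (i,i)) - nek_h A i \<and>
        \<epsilon> i > (\<Sum>j<i. cmod (A $$ (i,j)) * \<epsilon> j / cmod (A $$ (j,j))))"

definition nek_k :: "complex mat \<Rightarrow> nat \<Rightarrow> nat" where
  "nek_k A n = (LEAST k. k < n \<and> (\<forall>j. k < j \<and> j < n \<longrightarrow> A $$ (k,j) = 0))"

definition cond_C2 :: "complex mat \<Rightarrow> nat \<Rightarrow> (nat \<Rightarrow> real) \<Rightarrow> bool" where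
  "cond_C2 A n \<epsilon> \<longleftrightarrow>
     (\<forall>i < nek_k A n. \<epsilon> i = 0) \<and>
     (\<forall>i. nek_k A n \<le> i \<and> i < n \<longrightarrow>
        0 < \<epsilon> i \<and> \<epsilon> i < cmod (A $$ (i,i)) - nek_h A i \<and>
        \<epsilon> i > (\<Sum>j\<in>{nek_k A n..<i}. cmod (A $$ (i,j)) * \<epsilon> j / cmod (A $$ (j,j))))"

definition nek_S :: "complex mat \<Rightarrow> nat \<Rightarrow> (nat \<Rightarrow> real) \<Rightarrow> complex mat" where
  "nek_S A n \<epsilon> = mat n n (\<lambda>(i,j). if i = j
       then complex_of_real ((nek_h A i + \<epsilon> i) / cmod (A $$ (i,i))) else 0)"

end

theory Submission
  imports Defs "Jordan_Normal_Form.Determinant"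
begin

text \<open>For a matrix M with nonzero diagonal, a forward induction on the row index gives
  |m_ii| |w_i| \<le> h_i(M) max_j |w_j| + z_i(M) max_j |(Mw)_j|.  If M is Nekrasov, evaluating
  this at an index where |w_i| is maximal yields
  max_i |w_i| \<le> max_i z_i(M) / (|m_ii| - h_i(M)) \<cdot> max_i |(Mw)_i|,
  so M is nonsingular and the rows of its inverse are bounded accordingly.
  The diagonal scaling S = diag(d_i), d_i = (h_i(A) + \<epsilon>_i) / |a_ii|, leaves z unchanged and
  turns the diagonal of AS into h_i(A) + \<epsilon>_i; conditions (C1) and (C2) are what is
  needed to get h_i(AS) < h_i(A) + \<epsilon>_i, so AS is again Nekrasov.  Finally A w = y means
  (AS)(S^-1 w) = y, which transfers the bound from AS to A at the cost of the factor max_i d_i.\<close>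

declare nek_h.simps[simp del] nek_z.simps[simp del]

lemma nek_h_nonneg: "0 \<le> nek_h A i"
proof (induction i rule: less_induct)
  case (less i)
  show ?case
    by (subst nek_h.simps) (intro add_nonneg_nonneg sum_nonneg; use less in auto)
qed

lemma sum_lessThan_split_at:
  fixes f :: "nat \<Rightarrow> 'a::comm_monoid_add"
  assumes "i < n"
  shows "(\<Sum>j<n. f j) = (\<Sum>j<i. f j) + f i + (\<Sum>j\<in>{i<..<n}. f j)"
proof -
  have "{..<n} = {..<i} \<union> {i} \<union> {i<..<n}" using assms by auto
  moreover have "sum f ({..<i} \<union> {i<..<n}) = sum f {..<i} + sum f {i<..<n}"
    by (rule sum.union_disjoint) auto
  ultimately show ?thesis by (simp add: algebra_simps)
qed

subsection \<open>Solutions of Nekrasov systems\<close>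

lemma nek_row_estimate:
  fixes M :: "complex mat" and w :: "nat \<Rightarrow> complex"
  assumes M: "M \<in> carrier_mat n n" and diag: "\<forall>i<n. M $$ (i,i) \<noteq> 0"
    and r: "\<forall>j<n. cmod (w j) \<le> r"
    and Y: "\<forall>i<n. cmod (\<Sum>j<n. M $$ (i,j) * w j) \<le> Y"
    and i: "i < n"
  shows "cmod (M $$ (i,i)) * cmod (w i) \<le> nek_h M i * r + nek_z M i * Y"
  using i
proof (induction i rule: less_induct)
  case (less i)
  let ?m = "\<lambda>j. M $$ (i,j)"
  let ?bound = "\<lambda>j. (nek_h M j * r + nek_z M j * Y) / cmod (M $$ (j,j))"
  have "(\<Sum>j<n. ?m j * w j) = (\<Sum>j<i. ?m j * w j) + ?m i * w i + (\<Sum>j\<in>{i<..<n}. ?m j * w j)"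
    using less.prems by (rule sum_lessThan_split_at)
  then have "cmod (?m i * w i) = cmod ((\<Sum>j<n. ?m j * w j) - (\<Sum>j<i. ?m j * w j)
      - (\<Sum>j\<in>{i<..<n}. ?m j * w j))"
    by simp
  also have "\<dots> \<le> cmod (\<Sum>j<n. ?m j * w j) + cmod (\<Sum>j<i. ?m j * w j)
      + cmod (\<Sum>j\<in>{i<..<n}. ?m j * w j)"
    by (meson norm_triangle_ineq4 add_right_mono order_trans)
  also have "\<dots> \<le> Y + (\<Sum>j<i. cmod (?m j) * ?bound j) + (\<Sum>j\<in>{i<..<n}. cmod (?m j) * r)"
  proof (intro add_mono)
    show "cmod (\<Sum>j<n. ?m j * w j) \<le> Y" using Y less.prems by auto
    have "cmod (\<Sum>j<i. ?m j * w j) \<le> (\<Sum>j<i. cmod (?m j) * cmod (w j))"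
      by (rule order_trans[OF norm_sum]) (simp add: norm_mult)
    also have "\<dots> \<le> (\<Sum>j<i. cmod (?m j) * ?bound j)"
    proof (intro sum_mono mult_left_mono)
      fix j assume j: "j \<in> {..<i}"
      then have "j < n" using less.prems by auto
      then have "0 < cmod (M $$ (j,j))" and
        "cmod (M $$ (j,j)) * cmod (w j) \<le> nek_h M j * r + nek_z M j * Y"
        using diag less.IH j by auto
      then show "cmod (w j) \<le> ?bound j" by (simp add: field_simps)
    qed simp
    finally show "cmod (\<Sum>j<i. ?m j * w j) \<le> \<dots>" .
    have "cmod (\<Sum>j\<in>{i<..<n}. ?m j * w j) \<le> (\<Sum>j\<in>{i<..<n}. cmod (?m j) * cmod (w j))"
      by (rule order_trans[OF norm_sum]) (simp add: norm_mult)
    also have "\<dots> \<le> (\<Sum>j\<in>{i<..<n}. cmod (?m j) * r)"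
      by (intro sum_mono mult_left_mono) (use r in auto)
    finally show "cmod (\<Sum>j\<in>{i<..<n}. ?m j * w j) \<le> \<dots>" .
  qed
  also have "\<dots> = nek_h M i * r + nek_z M i * Y"
  proof -
    have "(\<Sum>j<i. cmod (?m j) * ?bound j)
        = r * (\<Sum>j<i. cmod (?m j) * nek_h M j / cmod (M $$ (j,j)))
          + Y * (\<Sum>j<i. cmod (?m j) * nek_z M j / cmod (M $$ (j,j)))"
      by (simp add: sum_distrib_left sum.distrib[symmetric] add_divide_distrib algebra_simps)
    moreover have "(\<Sum>j\<in>{i<..<n}. cmod (?m j) * r) = r * (\<Sum>j\<in>{i<..<n}. cmod (?m j))"
      by (simp add: sum_distrib_left mult.commute)
    ultimately show ?thesis
      using M by (simp add: nek_h.simps[of M i] nek_z.simps[of M i] algebra_simps)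
  qed
  finally show ?case by (simp add: norm_mult)
qed

lemma nekrasov_solution_bound:
  fixes M :: "complex mat" and w :: "nat \<Rightarrow> complex"
  assumes M: "nekrasov M n"
    and Y: "\<forall>i<n. cmod (\<Sum>j<n. M $$ (i,j) * w j) \<le> Y"
    and i: "i < n"
  shows "cmod (w i) \<le> Max ((\<lambda>i. nek_z M i / (cmod (M $$ (i,i)) - nek_h M i)) ` {..<n}) * Y"
proof -
  define r where "r = Max ((\<lambda>j. cmod (w j)) ` {..<n})"
  have wr: "\<forall>j<n. cmod (w j) \<le> r" unfolding r_def by auto
  have "r \<in> (\<lambda>j. cmod (w j)) ` {..<n}" unfolding r_def using i by (intro Max_in) auto
  then obtain p where p: "p < n" "r = cmod (w p)" by auto
  have "0 \<le> Y" using Y i by (meson norm_ge_zero order_trans)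
  have "cmod (M $$ (p,p)) * r \<le> nek_h M p * r + nek_z M p * Y"
    using nek_row_estimate[of M n w r Y p] M wr Y p unfolding nekrasov_def by auto
  moreover have "0 < cmod (M $$ (p,p)) - nek_h M p" using M p unfolding nekrasov_def by auto
  ultimately have "r \<le> nek_z M p / (cmod (M $$ (p,p)) - nek_h M p) * Y"
    by (simp add: field_simps)
  also have "\<dots> \<le> Max ((\<lambda>i. nek_z M i / (cmod (M $$ (i,i)) - nek_h M i)) ` {..<n}) * Y"
    by (intro mult_right_mono Max_ge) (use p \<open>0 \<le> Y\<close> in auto)
  finally show ?thesis using wr i by force
qed

lemma nekrasov_invertible:
  assumes M: "nekrasov M n"
  shows "invertible_mat M"
proof -
  have carrier: "M \<in> carrier_mat n n" using M unfolding nekrasov_def by simp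
  have "det M \<noteq> 0"
  proof
    assume "det M = 0"
    then obtain v where v: "v \<in> carrier_vec n" "v \<noteq> 0\<^sub>v n" "M *\<^sub>v v = 0\<^sub>v n"
      using det_0_iff_vec_prod_zero_field[OF carrier] by auto
    have "\<forall>i<n. cmod (\<Sum>j<n. M $$ (i,j) * v $ j) \<le> 0"
    proof (intro allI impI)
      fix i assume i: "i < n"
      have "(M *\<^sub>v v) $ i = (\<Sum>j<n. M $$ (i,j) * v $ j)"
        using carrier v(1) i by (simp add: scalar_prod_def lessThan_atLeast0)
      then show "cmod (\<Sum>j<n. M $$ (i,j) * v $ j) \<le> 0" using v(3) i by simp
    qed
    then have "cmod (v $ i) \<le> 0" if "i < n" for i
      using nekrasov_solution_bound[OF M _ that, of "\<lambda>j. v $ j" 0] by simp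
    then have "v = 0\<^sub>v n" using v(1) by (intro eq_vecI) auto
    with v(2) show False by simp
  qed
  then obtain B where "B \<in> carrier_mat n n" "B * M = 1\<^sub>m n" "M * B = 1\<^sub>m n"
    using det_non_zero_imp_unit[OF carrier, of "()"] unfolding Units_def ring_mat_def by auto
  then show ?thesis
    using carrier unfolding invertible_mat_def inverts_mat_def by auto
qed

subsection \<open>Row sums of an inverse\<close>

lemma inverse_row_sum_le:
  fixes A B :: "complex mat"
  assumes A: "A \<in> carrier_mat n n" and B: "B \<in> carrier_mat n n" and AB: "A * B = 1\<^sub>m n"
    and bound: "\<And>w. \<forall>i<n. cmod (\<Sum>j<n. A $$ (i,j) * w j) \<le> 1 \<Longrightarrow> cmod (w p) \<le> C"
    and p: "p < n"
  shows "(\<Sum>j<n. cmod (B $$ (p,j))) \<le> C"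
proof -
  \<comment> \<open>B y with the unimodular y_j = conj(b_pj)/|b_pj| has p-th entry equal to the row sum.\<close>
  define y where "y j = (if B $$ (p,j) = 0 then 0 else cnj (B $$ (p,j)) / cmod (B $$ (p,j)))" for j
  define x where "x i = (\<Sum>j<n. B $$ (i,j) * y j)" for i
  have By: "B $$ (p,j) * y j = complex_of_real (cmod (B $$ (p,j)))" for j
  proof (cases "B $$ (p,j) = 0")
    case False
    then show ?thesis
      using complex_norm_square[of "B $$ (p,j)"]
      by (simp add: y_def power2_eq_square field_simps)
  qed (simp add: y_def)
  have Ax: "(\<Sum>k<n. A $$ (i,k) * x k) = y i" if i: "i < n" for i
  proof -
    have "(\<Sum>k<n. A $$ (i,k) * x k) = (\<Sum>k<n. \<Sum>j<n. A $$ (i,k) * B $$ (k,j) * y j)"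
      unfolding x_def by (simp add: sum_distrib_left mult.assoc)
    also have "\<dots> = (\<Sum>j<n. (\<Sum>k<n. A $$ (i,k) * B $$ (k,j)) * y j)"
      by (subst sum.swap) (simp add: sum_distrib_right)
    also have "\<dots> = (\<Sum>j<n. (if i = j then y j else 0))"
    proof (intro sum.cong refl)
      fix j assume "j \<in> {..<n}"
      then have "(\<Sum>k<n. A $$ (i,k) * B $$ (k,j)) = (A * B) $$ (i,j)"
        using A B i by (simp add: scalar_prod_def lessThan_atLeast0)
      then show "(\<Sum>k<n. A $$ (i,k) * B $$ (k,j)) * y j = (if i = j then y j else 0)"
        using AB i \<open>j \<in> {..<n}\<close> by simp
    qed
    finally show ?thesis using i by simp
  qed
  have "cmod (y i) \<le> 1" for i unfolding y_def by (simp add: norm_divide)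
  then have "cmod (x p) \<le> C" using bound[of x] Ax by simp
  moreover have "cmod (x p) = (\<Sum>j<n. cmod (B $$ (p,j)))"
    unfolding x_def By of_real_sum[symmetric] norm_of_real by (intro abs_of_nonneg sum_nonneg) simp
  ultimately show ?thesis by simp
qed

lemma norm_inf_mat_le:
  assumes B: "B \<in> carrier_mat n n" and n: "0 < n"
    and rows: "\<forall>p<n. (\<Sum>j<n. cmod (B $$ (p,j))) \<le> C"
  shows "norm_inf_mat B \<le> C"
proof -
  have "0 \<le> C" using rows n by (meson order_trans sum_nonneg norm_ge_zero)
  then show ?thesis using B rows unfolding norm_inf_mat_def by (subst Max_le_iff) auto
qed

subsection \<open>Right scaling by a positive diagonal matrix\<close>

lemma cmod_mult_mat_diag_index:
  fixes A :: "complex mat"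
  assumes "A \<in> carrier_mat n n" "0 \<le> d j" "i < n" "j < n"
  shows "cmod ((A * mat_diag n (\<lambda>j. complex_of_real (d j))) $$ (i,j)) = cmod (A $$ (i,j)) * d j"
  using assms by (simp add: mat_diag_mult_right norm_mult)

lemma nek_z_mult_mat_diag:
  fixes A :: "complex mat"
  assumes A: "A \<in> carrier_mat n n" and d: "\<forall>j<n. 0 < d j" and i: "i < n"
  shows "nek_z (A * mat_diag n (\<lambda>j. complex_of_real (d j))) i = nek_z A i"
  using i
proof (induction i rule: less_induct)
  case (less i)
  show ?case
    unfolding nek_z.simps[of _ i]
  proof (intro arg_cong2[where f="(+)"] sum.cong refl)
    fix j assume "j \<in> {..<i}"
    then have j: "j < n" "j < i" using less.prems by auto
    then have "0 < d j" using d by simp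
    then show "cmod ((A * mat_diag n (\<lambda>j. complex_of_real (d j))) $$ (i,j))
        * nek_z (A * mat_diag n (\<lambda>j. complex_of_real (d j))) j
        / cmod ((A * mat_diag n (\<lambda>j. complex_of_real (d j))) $$ (j,j))
      = cmod (A $$ (i,j)) * nek_z A j / cmod (A $$ (j,j))"
      using cmod_mult_mat_diag_index[OF A _ less.prems j(1)] cmod_mult_mat_diag_index[OF A _ j(1) j(1)]
        less.IH[OF j(2) j(1)] by simp
  qed
qed

lemma nek_h_mult_mat_diag:
  fixes A :: "complex mat" and d :: "nat \<Rightarrow> real" and n :: nat
  defines "M \<equiv> A * mat_diag n (\<lambda>j. complex_of_real (d j))"
  assumes A: "A \<in> carrier_mat n n" and d: "\<forall>j<n. 0 < d j" and i: "i < n"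
  shows "nek_h M i = (\<Sum>j<i. cmod (A $$ (i,j)) * nek_h M j / cmod (A $$ (j,j)))
    + (\<Sum>j\<in>{i<..<n}. cmod (A $$ (i,j)) * d j)"
proof -
  have cM: "cmod (M $$ (k,j)) = cmod (A $$ (k,j)) * d j" if "k < n" "j < n" for k j
    unfolding M_def using d that by (intro cmod_mult_mat_diag_index[OF A]) auto
  have "dim_col M = n" unfolding M_def using A by (simp add: mat_diag_def)
  moreover have "\<forall>j<i. d j \<noteq> 0" using d i by (metis less_trans less_irrefl)
  ultimately show ?thesis
    using cM i by (subst nek_h.simps) (intro arg_cong2[where f="(+)"] sum.cong; simp)
qed

subsection \<open>The scaling S and conditions (C1), (C2)\<close>

definition nek_scale :: "complex mat \<Rightarrow> (nat \<Rightarrow> real) \<Rightarrow> nat \<Rightarrow> real" where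
  "nek_scale A \<epsilon> i = (nek_h A i + \<epsilon> i) / cmod (A $$ (i,i))"

lemma nek_S_eq_mat_diag: "nek_S A n \<epsilon> = mat_diag n (\<lambda>j. complex_of_real (nek_scale A \<epsilon> j))"
  unfolding nek_S_def mat_diag_def nek_scale_def by (rule eq_matI) auto

definition nek_eps_sum :: "complex mat \<Rightarrow> (nat \<Rightarrow> real) \<Rightarrow> nat \<Rightarrow> real" where
  "nek_eps_sum A \<epsilon> i = (\<Sum>j<i. cmod (A $$ (i,j)) * \<epsilon> j / cmod (A $$ (j,j)))"

text \<open>What (C1) and (C2) have in common: the diagonal of AS is positive and, except in the
  first row, at most that of A; and in every row the weighted sum of the earlier \<epsilon>_j either
  stays strictly below \<epsilon>_i or some entry to the right of the diagonal is strictly shrunk.\<close>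

definition admissible_eps :: "complex mat \<Rightarrow> nat \<Rightarrow> (nat \<Rightarrow> real) \<Rightarrow> bool" where
  "admissible_eps A n \<epsilon> \<longleftrightarrow>
     (\<forall>i<n. 0 < nek_h A i + \<epsilon> i) \<and>
     (\<forall>i. 0 < i \<and> i < n \<longrightarrow> nek_h A i + \<epsilon> i \<le> cmod (A $$ (i,i))) \<and>
     (\<forall>i<n. nek_eps_sum A \<epsilon> i \<le> \<epsilon> i) \<and>
     (\<forall>i<n. nek_eps_sum A \<epsilon> i < \<epsilon> i \<or>
        (\<exists>j. i < j \<and> j < n \<and> A $$ (i,j) \<noteq> 0 \<and> nek_h A j + \<epsilon> j < cmod (A $$ (j,j))))"

lemma nek_h_pos_of_upper_nonzero:
  assumes "i < j" "j < dim_col A" "A $$ (i,j) \<noteq> 0"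
  shows "0 < nek_h A i"
proof -
  have "0 < cmod (A $$ (i,j))" using assms(3) by simp
  also have "\<dots> \<le> (\<Sum>j\<in>{i<..<dim_col A}. cmod (A $$ (i,j)))"
    using assms by (intro member_le_sum) auto
  also have "\<dots> \<le> nek_h A i"
    by (subst nek_h.simps) (simp add: sum_nonneg nek_h_nonneg)
  finally show ?thesis .
qed

lemma nek_k_less:
  assumes "0 < n"
  shows "nek_k A n < n"
proof -
  have "n - 1 < n \<and> (\<forall>j. n - 1 < j \<and> j < n \<longrightarrow> A $$ (n - 1, j) = 0)" using assms by auto
  then show ?thesis unfolding nek_k_def by (rule LeastI2) simp
qed

lemma upper_nonzero_before_nek_k:
  assumes "0 < n" "i < nek_k A n"
  shows "\<exists>j. i < j \<and> j < n \<and> A $$ (i,j) \<noteq> 0"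
proof -
  have "\<not> (i < n \<and> (\<forall>j. i < j \<and> j < n \<longrightarrow> A $$ (i,j) = 0))"
    using assms(2) unfolding nek_k_def by (rule not_less_Least)
  moreover have "i < n" using assms nek_k_less[of n A] by simp
  ultimately show ?thesis by auto
qed

lemma cond_C1_admissible:
  assumes "cond_C1 A n \<epsilon>"
  shows "admissible_eps A n \<epsilon>"
proof -
  have eps: "0 < \<epsilon> i \<and> nek_eps_sum A \<epsilon> i < \<epsilon> i" if "i < n" for i
    using assms that unfolding cond_C1_def nek_eps_sum_def by (cases i) (auto simp del: lessThan_Suc)
  show ?thesis
    unfolding admissible_eps_def
  proof (intro conjI allI impI)
    fix i assume "i < n"
    then show "0 < nek_h A i + \<epsilon> i" using eps nek_h_nonneg[of A i] by (simp add: add_nonneg_pos)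
    show "nek_eps_sum A \<epsilon> i \<le> \<epsilon> i" using eps \<open>i < n\<close> by (simp add: less_imp_le)
    show "nek_eps_sum A \<epsilon> i < \<epsilon> i \<or>
        (\<exists>j. i < j \<and> j < n \<and> A $$ (i,j) \<noteq> 0 \<and> nek_h A j + \<epsilon> j < cmod (A $$ (j,j)))"
      using eps \<open>i < n\<close> by simp
  next
    fix i assume "0 < i \<and> i < n"
    then show "nek_h A i + \<epsilon> i \<le> cmod (A $$ (i,i))"
      using assms unfolding cond_C1_def by (auto simp: Suc_le_eq)
  qed
qed

lemma cond_C2_admissible:
  assumes n: "0 < n" and A: "nekrasov A n" and C2: "cond_C2 A n \<epsilon>"
  shows "admissible_eps A n \<epsilon>"
proof -
  let ?k = "nek_k A n"
  have dim: "dim_col A = n" using A unfolding nekrasov_def by auto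
  have eps0: "\<epsilon> j = 0" if "j < ?k" for j using C2 that unfolding cond_C2_def by simp
  have strict: "nek_h A j + \<epsilon> j < cmod (A $$ (j,j))" if "j < n" for j
    using A C2 that eps0 unfolding nekrasov_def cond_C2_def by (cases "j < ?k") (auto simp: not_less)
  have pos: "0 < nek_h A i + \<epsilon> i" if "i < n" for i
  proof (cases "i < ?k")
    case True
    then obtain j where "i < j" "j < n" "A $$ (i,j) \<noteq> 0"
      using upper_nonzero_before_nek_k[OF n] by blast
    then show ?thesis using nek_h_pos_of_upper_nonzero[of i j A] dim eps0 True by simp
  next
    case False
    then have "0 < \<epsilon> i" using C2 that unfolding cond_C2_def by (auto simp: not_less)
    then show ?thesis using nek_h_nonneg[of A i] by simp
  qed
  have sum_eq: "nek_eps_sum A \<epsilon> i = (\<Sum>j\<in>{?k..<i}. cmod (A $$ (i,j)) * \<epsilon> j / cmod (A $$ (j,j)))"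
    for i unfolding nek_eps_sum_def using eps0 by (intro sum.mono_neutral_right) auto
  have rows: "nek_eps_sum A \<epsilon> i < \<epsilon> i \<or>
      (nek_eps_sum A \<epsilon> i = \<epsilon> i \<and> (\<exists>j. i < j \<and> j < n \<and> A $$ (i,j) \<noteq> 0))"
    if "i < n" for i
  proof (cases "i < ?k")
    case True
    then show ?thesis using sum_eq[of i] eps0 upper_nonzero_before_nek_k[OF n] by simp
  next
    case False
    then show ?thesis using C2 that sum_eq[of i] unfolding cond_C2_def by (auto simp: not_less)
  qed
  show ?thesis
    unfolding admissible_eps_def using pos strict rows by (smt (verit) order.strict_trans)
qed

lemma nek_scale_le_one:
  assumes "nek_h A j + \<epsilon> j \<le> cmod (A $$ (j,j))"
  shows "nek_scale A \<epsilon> j \<le> 1"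
  using assms unfolding nek_scale_def by (cases "A $$ (j,j) = 0") auto

lemma nek_scale_less_one:
  assumes "nek_h A j + \<epsilon> j < cmod (A $$ (j,j))"
  shows "nek_scale A \<epsilon> j < 1"
  using assms unfolding nek_scale_def by (cases "A $$ (j,j) = 0") auto

lemma admissible_nek_scale_pos:
  assumes "nekrasov A n" "admissible_eps A n \<epsilon>" "j < n"
  shows "0 < nek_scale A \<epsilon> j"
  using assms unfolding nekrasov_def admissible_eps_def nek_scale_def by simp

lemma admissible_nek_h_scaled_less:
  assumes A: "nekrasov A n" and adm: "admissible_eps A n \<epsilon>" and i: "i < n"
  shows "nek_h (A * nek_S A n \<epsilon>) i < nek_h A i + \<epsilon> i"
  using i
proof (induction i rule: less_induct)
  case (less i)
  let ?M = "A * nek_S A n \<epsilon>"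
  let ?a = "\<lambda>j. cmod (A $$ (i,j))"
  define H where "H = (\<Sum>j<i. ?a j * nek_h A j / cmod (A $$ (j,j)))"
  define U where "U = (\<Sum>j\<in>{i<..<n}. ?a j)"
  define U\<^sub>S where "U\<^sub>S = (\<Sum>j\<in>{i<..<n}. ?a j * nek_scale A \<epsilon> j)"
  have carrier: "A \<in> carrier_mat n n" using A unfolding nekrasov_def by simp
  have scale_pos: "\<forall>j<n. 0 < nek_scale A \<epsilon> j" using admissible_nek_scale_pos[OF A adm] by simp
  have scale_le: "?a j * nek_scale A \<epsilon> j \<le> ?a j" if "i < j" "j < n" for j
    using adm that scale_pos nek_scale_le_one[of A j \<epsilon>]
    by (intro mult_right_le_one_le) (auto simp: admissible_eps_def)
  have "(\<Sum>j<i. ?a j * nek_h ?M j / cmod (A $$ (j,j)))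
      \<le> (\<Sum>j<i. ?a j * (nek_h A j + \<epsilon> j) / cmod (A $$ (j,j)))"
    using less by (intro sum_mono divide_right_mono mult_left_mono) (auto intro!: less_imp_le)
  also have "\<dots> = H + nek_eps_sum A \<epsilon> i"
    unfolding H_def nek_eps_sum_def
    by (simp add: sum.distrib[symmetric] add_divide_distrib distrib_left)
  finally have "nek_h ?M i \<le> H + nek_eps_sum A \<epsilon> i + U\<^sub>S"
    using nek_h_mult_mat_diag[OF carrier scale_pos less.prems]
    unfolding nek_S_eq_mat_diag U\<^sub>S_def by simp
  moreover have "nek_h A i = H + U"
    using carrier unfolding H_def U_def by (subst nek_h.simps) simp
  moreover have "U\<^sub>S \<le> U"
    unfolding U\<^sub>S_def U_def using scale_le by (intro sum_mono) auto
  moreover have "nek_eps_sum A \<epsilon> i \<le> \<epsilon> i" using adm less.prems unfolding admissible_eps_def by simp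
  moreover have "nek_eps_sum A \<epsilon> i < \<epsilon> i \<or> U\<^sub>S < U"
  proof -
    { fix j assume j: "i < j" "j < n" "A $$ (i,j) \<noteq> 0" and "nek_h A j + \<epsilon> j < cmod (A $$ (j,j))"
      then have "?a j * nek_scale A \<epsilon> j < ?a j" using nek_scale_less_one by simp
      then have "U\<^sub>S < U"
        unfolding U\<^sub>S_def U_def using j scale_le
        by (intro sum_strict_mono_ex1 bexI[of _ j]) auto }
    then show ?thesis using adm less.prems unfolding admissible_eps_def by blast
  qed
  ultimately show ?case by linarith
qed

lemma admissible_scaled_diag:
  assumes A: "nekrasov A n" and adm: "admissible_eps A n \<epsilon>" and i: "i < n"
  shows "cmod ((A * nek_S A n \<epsilon>) $$ (i,i)) = nek_h A i + \<epsilon> i"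
proof -
  have "A \<in> carrier_mat n n" "A $$ (i,i) \<noteq> 0" using A i unfolding nekrasov_def by auto
  then show ?thesis
    unfolding nek_S_eq_mat_diag
    using cmod_mult_mat_diag_index[of A n "nek_scale A \<epsilon>" i i] admissible_nek_scale_pos[OF A adm i] i
    by (simp add: nek_scale_def)
qed

lemma admissible_scaled_nekrasov:
  assumes A: "nekrasov A n" and adm: "admissible_eps A n \<epsilon>"
  shows "nekrasov (A * nek_S A n \<epsilon>) n"
proof -
  have "A * nek_S A n \<epsilon> \<in> carrier_mat n n"
    using A unfolding nekrasov_def nek_S_eq_mat_diag by auto
  moreover have "0 < nek_h A i + \<epsilon> i" if "i < n" for i
    using adm that unfolding admissible_eps_def by simp
  ultimately show ?thesis
    unfolding nekrasov_def
    using admissible_scaled_diag[OF A adm] admissible_nek_h_scaled_less[OF A adm]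
    by (metis norm_zero order_less_irrefl)
qed

lemma admissible_solution_bound:
  fixes w :: "nat \<Rightarrow> complex"
  assumes A: "nekrasov A n" and adm: "admissible_eps A n \<epsilon>"
    and w: "\<forall>i<n. cmod (\<Sum>j<n. A $$ (i,j) * w j) \<le> 1" and p: "p < n"
  shows "cmod (w p) \<le> Max ((\<lambda>i. (nek_h A i + \<epsilon> i) / cmod (A $$ (i,i))) ` {..<n})
    * Max ((\<lambda>i. nek_z A i / (nek_h A i + \<epsilon> i - nek_h (A * nek_S A n \<epsilon>) i)) ` {..<n})"
    (is "_ \<le> ?max_d * ?max_c")
proof -
  let ?M = "A * nek_S A n \<epsilon>"
  let ?d = "nek_scale A \<epsilon>"
  have carrier: "A \<in> carrier_mat n n" using A unfolding nekrasov_def by simp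
  have d_pos: "\<forall>j<n. 0 < ?d j" using admissible_nek_scale_pos[OF A adm] by simp
  then have d_nonzero: "?d j \<noteq> 0" if "j < n" for j using that by fastforce
  define v where "v j = w j / complex_of_real (?d j)" for j
  have "(\<Sum>j<n. ?M $$ (i,j) * v j) = (\<Sum>j<n. A $$ (i,j) * w j)" if "i < n" for i
    using carrier d_nonzero that
    by (intro sum.cong) (simp_all add: nek_S_eq_mat_diag mat_diag_mult_right v_def)
  then have "\<forall>i<n. cmod (\<Sum>j<n. ?M $$ (i,j) * v j) \<le> 1" using w by simp
  then have "cmod (v p) \<le> Max ((\<lambda>i. nek_z ?M i / (cmod (?M $$ (i,i)) - nek_h ?M i)) ` {..<n}) * 1"
    by (rule nekrasov_solution_bound[OF admissible_scaled_nekrasov[OF A adm] _ p])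
  also have "Max ((\<lambda>i. nek_z ?M i / (cmod (?M $$ (i,i)) - nek_h ?M i)) ` {..<n}) = ?max_c"
    using nek_z_mult_mat_diag[OF carrier d_pos] admissible_scaled_diag[OF A adm]
    unfolding nek_S_eq_mat_diag[symmetric] by (intro arg_cong[where f=Max] image_cong) auto
  finally have v_le: "cmod (v p) \<le> ?max_c" by simp
  have d_le: "?d p \<le> ?max_d" unfolding nek_scale_def using p by (intro Max_ge) auto
  have "cmod (w p) = ?d p * cmod (v p)"
    using d_pos d_nonzero[OF p] p by (simp add: v_def norm_divide abs_of_pos)
  also have "\<dots> \<le> ?max_d * ?max_c"
    using d_le v_le d_pos p by (intro mult_mono) fastforce+
  finally show ?thesis .
qed

theorem mainTheorem5:
  fixes A :: "complex mat" and n :: nat and \<epsilon> :: "nat \<Rightarrow> real"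
  assumes "0 < n"
    and "nekrasov A n"
    and "cond_C1 A n \<epsilon> \<or> cond_C2 A n \<epsilon>"
  shows "(\<forall>i<n. nek_h A i + \<epsilon> i - nek_h (A * nek_S A n \<epsilon>) i > 0)
    \<and> invertible_mat A
    \<and> (\<forall>B. B \<in> carrier_mat n n \<and> inverts_mat A B \<and> inverts_mat B A \<longrightarrow>
         norm_inf_mat B \<le>
           Max ((\<lambda>i. (nek_h A i + \<epsilon> i) / cmod (A $$ (i,i))) ` {..<n})
         * Max ((\<lambda>i. nek_z A i / (nek_h A i + \<epsilon> i - nek_h (A * nek_S A n \<epsilon>) i)) ` {..<n}))"
proof -
  have adm: "admissible_eps A n \<epsilon>"
    using assms cond_C1_admissible cond_C2_admissible by blast
  have carrier: "A \<in> carrier_mat n n" using assms(2) unfolding nekrasov_def by simp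
  let ?bound = "Max ((\<lambda>i. (nek_h A i + \<epsilon> i) / cmod (A $$ (i,i))) ` {..<n})
    * Max ((\<lambda>i. nek_z A i / (nek_h A i + \<epsilon> i - nek_h (A * nek_S A n \<epsilon>) i)) ` {..<n})"
  have "norm_inf_mat B \<le> ?bound" if B: "B \<in> carrier_mat n n" and AB: "inverts_mat A B" for B
  proof (intro norm_inf_mat_le[OF B assms(1)] allI impI)
    have "A * B = 1\<^sub>m n" using AB carrier unfolding inverts_mat_def by simp
    then show "(\<Sum>j<n. cmod (B $$ (p,j))) \<le> ?bound" if "p < n" for p
      using admissible_solution_bound[OF assms(2) adm] that by (intro inverse_row_sum_le[OF carrier B]) auto
  qed
  then show ?thesis
    using admissible_nek_h_scaled_less[OF assms(2) adm] nekrasov_invertible[OF assms(2)] by auto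
qed

end
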